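(* Let $n\in\mathbb{N}$ and $m\geq 3$. Then \[ \sigma'_m(n) =\frac{1}{(n-1)!} \sum_{k=1}^{n} (-1)^k (k-1)!\cdot B_{n,k} \big(1!\cdot e_{m+2,1},\ 2!\cdot e_{m+2,2},\ \dots,\ (n-k+1)!\cdot e_{m+2, n-k+1}\big). \]
   Context: The partial exponential Bell polynomials are $B_{n,k}(x_1,\dots,x_{n-k+1})=\sum \frac{n!}{j_1!\cdots j_{n-k+1}!}\prod_{i=1}^{n-k+1}\big(\frac{x_i}{i!}\big)^{j_i}$, the sum over all tuples of nonnegative integers $(j_1,\dots,j_{n-k+1})$ with $\sum_i j_i=k$ and $\sum_i i\,j_i=n$. For $m\ge3$ and $n\in\mathbb{N}$, $\sigma'_m(n)$ is the sum of the positive divisors $d$ of $n$ with $d\equiv 0$, $1$ or $m-1 \pmod m$. For $g\ge5$ and $n\in\mathbb{N}_0$, $e_{g,n}=1$ if $n=0$, $e_{g,n}=(-1)^k$ if $n=P_{g,k}$ or $n=Q_{g,k}$ for some $k\in\mathbb{N}$ (where $P_{g,k}=\frac{k((g-2)k-(g-4))}{2}$, $Q_{g,k}=\frac{k((g-2)k+(g-4))}{2}$), and $e_{g,n}=0$ otherwise. *)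

theory Defs
  imports "HOL-Analysis.Analysis"
begin

text \<open>The index tuples (j_1,...,j_{n-k+1}) are represented as functions
  j :: nat => nat that vanish outside {1..n-k+1}.\<close>
definition bell_tuples :: "nat \<Rightarrow> nat \<Rightarrow> (nat \<Rightarrow> nat) set" where
  "bell_tuples n k = {j. (\<forall>i. i \<notin> {1..n-k+1} \<longrightarrow> j i = 0)
       \<and> (\<Sum>i=1..n-k+1. j i) = k \<and> (\<Sum>i=1..n-k+1. i * j i) = n}"

definition partial_bell :: "nat \<Rightarrow> nat \<Rightarrow> (nat \<Rightarrow> real) \<Rightarrow> real" where
  "partial_bell n k x = (\<Sum>j\<in>bell_tuples n k.
      fact n / (\<Prod>i=1..n-k+1. fact (j i)) * (\<Prod>i=1..n-k+1. (x i / fact i) ^ j i))"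

definition sigma' :: "nat \<Rightarrow> nat \<Rightarrow> nat" where
  "sigma' m n = (\<Sum>d | d dvd n \<and> (d mod m = 0 \<or> d mod m = 1 \<or> d mod m = m - 1). d)"

definition P_pent :: "nat \<Rightarrow> nat \<Rightarrow> int" where
  "P_pent g k = (int k * ((int g - 2) * int k - (int g - 4))) div 2"

definition Q_pent :: "nat \<Rightarrow> nat \<Rightarrow> int" where
  "Q_pent g k = (int k * ((int g - 2) * int k + (int g - 4))) div 2"

text \<open>e_{g,n}.  For g >= 5 the numbers P_{g,k}, Q_{g,k} (k >= 1) are pairwise
  distinct, so the parity of k is well defined.\<close>
definition e_coef :: "nat \<Rightarrow> nat \<Rightarrow> int" where
  "e_coef g n = (if n = 0 then 1
     else if \<exists>k\<ge>1. int n = P_pent g k \<or> int n = Q_pent g k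
       then (-1) ^ (THE k. k \<ge> 1 \<and> (int n = P_pent g k \<or> int n = Q_pent g k))
     else 0)"

end

theory Submission
  imports Defs "HOL-Computational_Algebra.Formal_Power_Series"
begin

(* Write P for the product over i >= 1 of (1 - q^(m i)) (1 - q^(m i - 1)) (1 - q^(m i - m + 1)).
   By the Jacobi triple product, P is the sum over all integers k of (-1)^k q^G(k), where
   G(k) = m k (k + 1) / 2 - k runs through the generalised (m+2)-gonal numbers, so e_{m+2,n}
   is the n-th coefficient of P. Logarithmic differentiation of the product gives
   -q P'/P = sum of sigma'_m(n) q^n, that is -n [q^n] log P = sigma'_m(n), and expanding
   log P = log (1 + (P - 1)) in powers of P - 1 expresses [q^n] log P through partial Bell
   polynomials in the coefficients of P.
   Only coefficients up to q^n matter, so P is replaced by its finite part with i <= n. Its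
   coefficients come from Cauchy's finite triple product, which expands the last two factors
   in Gaussian binomials: after multiplication by the first factors, each term of that
   expansion agrees with one term (-1)^k q^G(k) modulo q^(n+1). *)

unbundle no vec_syntax
unbundle fps_syntax

section \<open>Logarithms of power series\<close>

lemma fps_ln_compose_nth:
  fixes F :: "'a::field_char_0 fps"
  shows "(fps_ln 1 oo F) $ n = (\<Sum>k=1..n. (-1) ^ (k - 1) / of_nat k * (F ^ k) $ n)"
proof -
  have "(fps_ln 1 oo F) $ n = (\<Sum>k=0..n. fps_ln 1 $ k * (F ^ k) $ n)"
    by (rule fps_compose_nth)
  also have "\<dots> = (\<Sum>k=1..n. fps_ln 1 $ k * (F ^ k) $ n)"
    by (rule sum.mono_neutral_right) (auto simp: Suc_le_eq)
  also have "\<dots> = (\<Sum>k=1..n. (-1) ^ (k - 1) / of_nat k * (F ^ k) $ n)"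
    by (rule sum.cong) (auto simp: fps_ln_nth)
  finally show ?thesis .
qed

lemma fps_deriv_ln_compose:
  fixes P :: "'a::field_char_0 fps"
  assumes "P $ 0 = 1"
  shows "fps_deriv (fps_ln 1 oo (P - 1)) = fps_deriv P * inverse P"
proof -
  have P1: "(P - 1) $ 0 = 0" using assms by simp
  have "fps_deriv (fps_ln 1 oo (P - 1)) = (fps_deriv (fps_ln 1) oo (P - 1)) * fps_deriv P"
    using fps_compose_deriv[OF P1] by simp
  also have "fps_deriv (fps_ln 1) oo (P - 1) = inverse ((1 + fps_X) oo (P - 1))"
    by (simp add: fps_ln_deriv fps_inverse_compose[OF P1])
  also have "(1 + fps_X) oo (P - 1) = P"
    using P1 by (simp add: fps_compose_add_distrib)
  finally show ?thesis by (simp add: mult.commute)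
qed

lemma fps_ln_compose_nth_eq_logderiv:
  fixes P S :: "'a::field_char_0 fps"
  assumes P0: "P $ 0 = 1" and logderiv: "fps_X * fps_deriv P = - (P * S)" and "n \<ge> 1"
  shows "of_nat n * (fps_ln 1 oo (P - 1)) $ n = - S $ n"
proof -
  have "fps_X * fps_deriv (fps_ln 1 oo (P - 1)) = (fps_X * fps_deriv P) * inverse P"
    using fps_deriv_ln_compose[OF P0] by (simp add: mult.assoc)
  also have "\<dots> = - S * (P * inverse P)"
    unfolding logderiv by (simp add: algebra_simps)
  also have "P * inverse P = 1" using P0 by (simp add: inverse_mult_eq_1')
  finally have eq: "fps_X * fps_deriv (fps_ln 1 oo (P - 1)) = - S" by simp
  obtain n' where n': "n = Suc n'" using \<open>n \<ge> 1\<close> by (cases n) auto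
  have "(fps_X * fps_deriv (fps_ln 1 oo (P - 1))) $ n = of_nat n * (fps_ln 1 oo (P - 1)) $ n"
    by (simp add: n' fps_deriv_nth)
  then show ?thesis using eq by simp
qed

section \<open>Powers of power series and partial Bell polynomials\<close>

lemma fps_power_nth_eq_if_prefix_eq:
  fixes A B :: "'a::comm_ring_1 fps"
  assumes "A $ 0 = 0" "B $ 0 = 0" "\<And>i. i \<le> s \<Longrightarrow> A $ i = B $ i" and "n < s + k"
  shows "(A ^ k) $ n = (B ^ k) $ n"
  using assms(4)
proof (induction k arbitrary: n)
  case 0
  then show ?case by simp
next
  case (Suc k)
  have "A $ i * (A ^ k) $ (n - i) = B $ i * (B ^ k) $ (n - i)" if "i \<le> n" for i
  proof (cases "i = 0 \<or> i \<le> s")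
    case True
    then have "i = 0 \<or> n - i < s + k" using Suc.prems by auto
    then show ?thesis using Suc.IH True assms(1-3) by auto
  next
    case False
    then have "n - i < k" using Suc.prems that by auto
    then show ?thesis
      using startsby_zero_power_prefix[OF assms(1)] startsby_zero_power_prefix[OF assms(2)] by simp
  qed
  then show ?case by (simp add: fps_mult_nth)
qed

definition part_multiplicities :: "nat \<Rightarrow> nat \<Rightarrow> nat \<Rightarrow> (nat \<Rightarrow> nat) set" where
  "part_multiplicities r k n = {j. (\<forall>i. i \<notin> {1..r} \<longrightarrow> j i = 0)
     \<and> (\<Sum>i=1..r. j i) = k \<and> (\<Sum>i=1..r. i * j i) = n}"

lemma finite_part_multiplicities: "finite (part_multiplicities r k n)"
proof (rule finite_subset)
  show "part_multiplicities r k n \<subseteq>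
      {j. \<forall>i. (i \<in> {1..r} \<longrightarrow> j i \<in> {0..k}) \<and> (i \<notin> {1..r} \<longrightarrow> j i = 0)}"
  proof safe
    fix j i assume j: "j \<in> part_multiplicities r k n" and i: "i \<in> {1..r}"
    have "j i \<le> (\<Sum>i=1..r. j i)" using i by (intro member_le_sum) auto
    then show "j i \<in> {0..k}" using j by (auto simp: part_multiplicities_def)
  qed (auto simp: part_multiplicities_def)
  show "finite {j. \<forall>i. (i \<in> {1..r} \<longrightarrow> j i \<in> {0..k}) \<and> (i \<notin> {1..r} \<longrightarrow> (j i :: nat) = 0)}"
    by (rule finite_set_of_finite_funs) auto
qed

lemma sum_part_multiplicities_Suc:
  "(\<Sum>j\<in>part_multiplicities (Suc r) k n. g j) =
   (\<Sum>t | t \<le> k \<and> Suc r * t \<le> n.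
      \<Sum>j\<in>part_multiplicities r (k - t) (n - Suc r * t). g (j(Suc r := t)))"
proof -
  let ?T = "{t. t \<le> k \<and> Suc r * t \<le> n}"
  let ?J = "\<lambda>t. part_multiplicities r (k - t) (n - Suc r * t)"
  have sums_upd: "(\<Sum>i=1..r. (j(Suc r := t)) i) = (\<Sum>i=1..r. j i)"
    "(\<Sum>i=1..r. i * (j(Suc r := t)) i) = (\<Sum>i=1..r. i * j i)" for j :: "nat \<Rightarrow> nat" and t
    by (auto intro!: sum.cong)
  have "(\<Sum>(t, j)\<in>Sigma ?T ?J. g (j(Suc r := t))) = (\<Sum>j\<in>part_multiplicities (Suc r) k n. g j)"
  proof (rule sum.reindex_bij_witness[where j = "\<lambda>(t, j). j(Suc r := t)" and i = "\<lambda>j. (j (Suc r), j(Suc r := 0))"])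
    fix tj assume "tj \<in> Sigma ?T ?J"
    then obtain t j where tj: "tj = (t, j)" "t \<le> k" "Suc r * t \<le> n" "j \<in> ?J t" by auto
    then have "j (Suc r) = 0" by (auto simp: part_multiplicities_def)
    then show "(\<lambda>j. (j (Suc r), j(Suc r := 0))) (case tj of (t, j) \<Rightarrow> j(Suc r := t)) = tj"
      using tj by auto
    show "(case tj of (t, j) \<Rightarrow> j(Suc r := t)) \<in> part_multiplicities (Suc r) k n"
      using tj sums_upd by (auto simp: part_multiplicities_def)
  next
    fix j assume j: "j \<in> part_multiplicities (Suc r) k n"
    then show "(case (j (Suc r), j(Suc r := 0)) of (t, j) \<Rightarrow> j(Suc r := t)) = j" by simp
    have "(\<Sum>i=1..r. j i) + j (Suc r) = k" "(\<Sum>i=1..r. i * j i) + Suc r * j (Suc r) = n"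
      using j by (auto simp: part_multiplicities_def)
    then show "(j (Suc r), j(Suc r := 0)) \<in> Sigma ?T ?J"
      using j sums_upd by (auto simp: part_multiplicities_def)
  qed auto
  then show ?thesis
    by (simp add: sum.Sigma finite_part_multiplicities)
qed

lemma part_multiplicities_0: "part_multiplicities 0 k n = (if k = 0 \<and> n = 0 then {\<lambda>_. 0} else {})"
  by (auto simp: part_multiplicities_def)

lemma fps_binomial_monomial_power_nth:
  fixes A :: "'a::comm_ring_1 fps"
  shows "((fps_const c * fps_X ^ s + A) ^ k) $ n =
    (\<Sum>t | t \<le> k \<and> s * t \<le> n. of_nat (k choose t) * c ^ t * (A ^ (k - t)) $ (n - s * t))"
proof -
  have "((fps_const c * fps_X ^ s + A) ^ k) $ n =
      (\<Sum>t\<le>k. of_nat (k choose t) * c ^ t * (fps_X ^ (s * t) * A ^ (k - t)) $ n)"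
    by (simp add: binomial_ring fps_sum_nth power_mult_distrib fps_const_power power_mult
        fps_mult_left_const_nth mult.assoc fps_of_nat[symmetric] del: of_nat_Suc)
  also have "\<dots> = (\<Sum>t\<le>k. if s * t \<le> n then of_nat (k choose t) * c ^ t * (A ^ (k - t)) $ (n - s * t) else 0)"
    by (rule sum.cong) (auto simp: fps_X_power_mult_nth)
  finally show ?thesis by (simp add: sum.inter_filter[symmetric] atMost_def)
qed

lemma fps_power_nth_multinomial:
  fixes a :: "nat \<Rightarrow> 'a::field_char_0"
  shows "((\<Sum>i=1..r. fps_const (a i) * fps_X ^ i) ^ k) $ n =
    fact k * (\<Sum>j\<in>part_multiplicities r k n. \<Prod>i=1..r. a i ^ j i / fact (j i))"
proof (induction r arbitrary: k n)
  case 0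
  then show ?case by (cases k) (auto simp: part_multiplicities_0)
next
  case (Suc r)
  define s where "s = Suc r"
  define c where "c = a s"
  define A where "A = (\<Sum>i=1..r. fps_const (a i) * fps_X ^ i)"
  let ?T = "{t. t \<le> k \<and> s * t \<le> n}"
  have "(\<Sum>i=1..s. fps_const (a i) * fps_X ^ i) = fps_const c * fps_X ^ s + A"
    by (simp add: A_def c_def s_def)
  then have "((\<Sum>i=1..s. fps_const (a i) * fps_X ^ i) ^ k) $ n =
      (\<Sum>t\<in>?T. of_nat (k choose t) * c ^ t * (A ^ (k - t)) $ (n - s * t))"
    by (simp only: fps_binomial_monomial_power_nth)
  also have "\<dots> = (\<Sum>t\<in>?T. fact k * (\<Sum>j\<in>part_multiplicities r (k - t) (n - s * t).
                       c ^ t / fact t * (\<Prod>i=1..r. a i ^ j i / fact (j i))))"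
  proof (rule sum.cong[OF refl])
    fix t assume "t \<in> ?T"
    then have "of_nat (k choose t) = (fact k / (fact t * fact (k - t)) :: 'a)"
      by (simp add: binomial_fact)
    then show "of_nat (k choose t) * c ^ t * (A ^ (k - t)) $ (n - s * t) =
        fact k * (\<Sum>j\<in>part_multiplicities r (k - t) (n - s * t).
                   c ^ t / fact t * (\<Prod>i=1..r. a i ^ j i / fact (j i)))"
      unfolding A_def Suc.IH by (simp add: sum_distrib_left)
  qed
  also have "\<dots> = fact k * (\<Sum>j\<in>part_multiplicities s k n. \<Prod>i=1..s. a i ^ j i / fact (j i))"
  proof -
    have upd: "(\<Prod>i=1..s. a i ^ (j(s := t)) i / fact ((j(s := t)) i)) =
        c ^ t / fact t * (\<Prod>i=1..r. a i ^ j i / fact (j i))" for j :: "nat \<Rightarrow> nat" and t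
    proof -
      have "(\<Prod>i=1..r. a i ^ (j(s := t)) i / fact ((j(s := t)) i)) =
          (\<Prod>i=1..r. a i ^ j i / fact (j i))"
        by (rule prod.cong) (auto simp: s_def)
      then show ?thesis by (simp add: c_def s_def)
    qed
    show ?thesis
      unfolding s_def sum_part_multiplicities_Suc unfolding s_def[symmetric] upd
      by (simp only: sum_distrib_left)
  qed
  finally show ?case by (simp add: s_def)
qed

lemma bell_tuples_eq: "bell_tuples n k = part_multiplicities (n - k + 1) k n"
  by (simp add: bell_tuples_def part_multiplicities_def)

lemma partial_bell_cong:
  assumes "\<And>i. 1 \<le> i \<Longrightarrow> i \<le> n - k + 1 \<Longrightarrow> x i = y i"
  shows "partial_bell n k x = partial_bell n k y"
  unfolding partial_bell_def using assms by (auto intro!: sum.cong prod.cong)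

lemma partial_bell_eq_fps_power_nth:
  fixes F :: "real fps"
  assumes F0: "F $ 0 = 0"
  shows "partial_bell n k (\<lambda>i. fact i * F $ i) = fact n / fact k * (F ^ k) $ n"
proof -
  define r where "r = n - k + 1"
  define H where "H = (\<Sum>i=1..r. fps_const (F $ i) * fps_X ^ i)"
  have H_nth: "H $ i = (if 1 \<le> i \<and> i \<le> r then F $ i else 0)" for i
  proof -
    have "H $ i = (\<Sum>j\<in>{1..r}. if i = j then F $ j else 0)"
      unfolding H_def fps_sum_nth by (rule sum.cong) auto
    then show ?thesis by simp
  qed
  have "partial_bell n k (\<lambda>i. fact i * F $ i) =
      fact n * (\<Sum>j\<in>part_multiplicities r k n. \<Prod>i=1..r. (F $ i) ^ j i / fact (j i))"
    unfolding partial_bell_def bell_tuples_eq r_def[symmetric] sum_distrib_left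
    by (simp add: prod_dividef)
  also have "\<dots> = fact n / fact k * (H ^ k) $ n"
    unfolding H_def fps_power_nth_multinomial by simp
  also have "(H ^ k) $ n = (F ^ k) $ n"
    by (rule fps_power_nth_eq_if_prefix_eq[where s = r]) (auto simp: H_nth F0 r_def not_less_eq_eq)
  finally show ?thesis .
qed

lemma fps_ln_compose_nth_eq_partial_bell:
  fixes F :: "real fps"
  assumes F0: "F $ 0 = 0" and "n \<ge> 1"
  shows "- real n * (fps_ln 1 oo F) $ n =
    1 / fact (n - 1) * (\<Sum>k=1..n. (-1) ^ k * fact (k - 1) * partial_bell n k (\<lambda>i. fact i * F $ i))"
proof -
  have "1 / fact (n - 1) * ((-1) ^ k * fact (k - 1) * partial_bell n k (\<lambda>i. fact i * F $ i))
      = - real n * ((-1) ^ (k - 1) / real k * (F ^ k) $ n)" if k: "k \<in> {1..n}" for k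
  proof -
    obtain k' where k': "k = Suc k'" using k by (cases k) auto
    obtain n' where n': "n = Suc n'" using \<open>n \<ge> 1\<close> by (cases n) auto
    have "1 / fact n' * ((-1) ^ Suc k' * fact k' * (fact (Suc n') / fact (Suc k') * c)) =
        - real (Suc n') * ((-1) ^ k' / real (Suc k') * c)" for c :: real
      by (simp add: divide_simps del: of_nat_Suc)
    then show ?thesis
      unfolding partial_bell_eq_fps_power_nth[OF F0] k' n' by simp
  qed
  then show ?thesis by (simp add: fps_ln_compose_nth sum_distrib_left)
qed

section \<open>Logarithmic derivatives of products of binomials 1 - X^h\<close>

definition multiples_fps :: "nat \<Rightarrow> 'a::comm_ring_1 fps" where
  "multiples_fps j = Abs_fps (\<lambda>N. if 0 < N \<and> j dvd N then of_nat j else 0)"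

lemma multiples_fps_nth: "0 < N \<Longrightarrow> multiples_fps j $ N = (if j dvd N then of_nat j else 0)"
  by (simp add: multiples_fps_def)

lemma one_minus_fps_X_power_mult_multiples_fps:
  assumes "j > 0"
  shows "(1 - fps_X ^ j) * multiples_fps j = (of_nat j * fps_X ^ j :: 'a::comm_ring_1 fps)"
proof (rule fps_ext)
  fix N
  have "((1 - fps_X ^ j) * multiples_fps j) $ N = multiples_fps j $ N - (fps_X ^ j * multiples_fps j) $ N"
    by (simp add: algebra_simps)
  also have "\<dots> = (of_nat j * fps_X ^ j :: 'a fps) $ N"
  proof (cases "N < j")
    case True
    then show ?thesis by (auto simp: multiples_fps_def fps_X_power_mult_nth dest: dvd_imp_le)
  next
    case False
    then have "j dvd N \<longleftrightarrow> j dvd (N - j)" by (simp add: dvd_minus_self)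
    then show ?thesis using False assms
      by (cases "N = j") (auto simp: multiples_fps_def fps_X_power_mult_nth)
  qed
  finally show "((1 - fps_X ^ j) * multiples_fps j) $ N = (of_nat j * fps_X ^ j :: 'a fps) $ N" .
qed

lemma fps_X_deriv_one_minus_fps_X_power:
  assumes "j > 0"
  shows "fps_X * fps_deriv (1 - fps_X ^ j :: 'a::comm_ring_1 fps) = - ((1 - fps_X ^ j) * multiples_fps j)"
proof -
  have "fps_X * fps_deriv (1 - fps_X ^ j :: 'a fps) = - (of_nat j * fps_X ^ j)"
    by (rule fps_ext) (auto simp: fps_deriv_nth fps_of_nat[symmetric] simp del: fps_of_nat)
  then show ?thesis by (simp only: one_minus_fps_X_power_mult_multiples_fps[OF assms])
qed

lemma fps_X_deriv_mult_logderiv: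
  fixes f g S T :: "'a::comm_ring_1 fps"
  assumes "fps_X * fps_deriv f = - (f * S)" "fps_X * fps_deriv g = - (g * T)"
  shows "fps_X * fps_deriv (f * g) = - ((f * g) * (S + T))"
proof -
  have "fps_X * fps_deriv (f * g) = f * (fps_X * fps_deriv g) + (fps_X * fps_deriv f) * g"
    by (simp add: algebra_simps)
  also have "\<dots> = - ((f * g) * (S + T))" using assms by (simp add: algebra_simps)
  finally show ?thesis .
qed

lemma fps_X_deriv_prod_one_minus_fps_X_power:
  assumes "finite I" "\<And>i. i \<in> I \<Longrightarrow> h i > 0"
  shows "fps_X * fps_deriv (\<Prod>i\<in>I. 1 - fps_X ^ h i :: 'a::comm_ring_1 fps) =
    - ((\<Prod>i\<in>I. 1 - fps_X ^ h i) * (\<Sum>i\<in>I. multiples_fps (h i)))"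
  using assms
proof (induction I rule: finite_induct)
  case empty
  then show ?case by simp
next
  case (insert x F)
  have "fps_X * fps_deriv ((1 - fps_X ^ h x) * (\<Prod>i\<in>F. 1 - fps_X ^ h i) :: 'a fps) =
      - (((1 - fps_X ^ h x) * (\<Prod>i\<in>F. 1 - fps_X ^ h i)) * (multiples_fps (h x) + (\<Sum>i\<in>F. multiples_fps (h i))))"
    by (rule fps_X_deriv_mult_logderiv[OF fps_X_deriv_one_minus_fps_X_power]) (use insert in auto)
  then show ?case using insert by simp
qed

section \<open>q-Pochhammer symbols and Gaussian binomial coefficients\<close>

definition qpoch :: "'a::comm_ring_1 \<Rightarrow> nat \<Rightarrow> 'a" where
  "qpoch q L = (\<Prod>i=1..L. 1 - q ^ i)"

fun qbinom :: "'a::comm_ring_1 \<Rightarrow> nat \<Rightarrow> nat \<Rightarrow> 'a" where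
  "qbinom q L 0 = 1"
| "qbinom q 0 (Suc k) = 0"
| "qbinom q (Suc L) (Suc k) = qbinom q L k + q ^ Suc k * qbinom q L (Suc k)"

lemma qpoch_0 [simp]: "qpoch q 0 = 1"
  by (simp add: qpoch_def)

lemma qpoch_Suc: "qpoch q (Suc L) = qpoch q L * (1 - q ^ Suc L)"
  by (simp add: qpoch_def)

lemma qpoch_split:
  assumes "a \<le> b"
  shows "qpoch q b = qpoch q a * (\<Prod>i\<in>{a<..b}. 1 - q ^ i)"
proof -
  have "{1..b} = {1..a} \<union> {a<..b}" using assms by auto
  then show ?thesis unfolding qpoch_def by (simp add: prod.union_disjoint ivl_disj_int_two)
qed

lemma qbinom_eq_0: "L < k \<Longrightarrow> qbinom q L k = 0"
proof (induction L arbitrary: k)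
  case 0
  then show ?case by (cases k) auto
next
  case (Suc L)
  then obtain k' where "k = Suc k'" by (cases k) auto
  with Suc show ?case by simp
qed

lemma qbinom_mult_qpoch_step:
  assumes prod: "\<And>k. k \<le> L \<Longrightarrow> qbinom q L k * qpoch q k * qpoch q (L - k) = qpoch q L"
    and s: "s \<le> L"
  shows "qbinom q L s * qpoch q (Suc s) * qpoch q (L - s) = qpoch q L * (1 - q ^ Suc s)"
    and "qbinom q L (Suc s) * qpoch q (Suc s) * qpoch q (L - s) = qpoch q L * (1 - q ^ (L - s))"
proof -
  have "qbinom q L s * qpoch q (Suc s) * qpoch q (L - s) =
      (qbinom q L s * qpoch q s * qpoch q (L - s)) * (1 - q ^ Suc s)"
    by (simp only: qpoch_Suc ac_simps)
  then show "qbinom q L s * qpoch q (Suc s) * qpoch q (L - s) = qpoch q L * (1 - q ^ Suc s)"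
    using prod[OF s] by simp
  show "qbinom q L (Suc s) * qpoch q (Suc s) * qpoch q (L - s) = qpoch q L * (1 - q ^ (L - s))"
  proof (cases "s = L")
    case True
    then show ?thesis by (simp add: qbinom_eq_0)
  next
    case False
    then have "L - s = Suc (L - Suc s)" using s by simp
    then have "qpoch q (L - s) = qpoch q (L - Suc s) * (1 - q ^ (L - s))"
      by (simp only: qpoch_Suc)
    then have "qbinom q L (Suc s) * qpoch q (Suc s) * qpoch q (L - s) =
        (qbinom q L (Suc s) * qpoch q (Suc s) * qpoch q (L - Suc s)) * (1 - q ^ (L - s))"
      by (simp only: ac_simps)
    then show ?thesis using prod[of "Suc s"] s False by simp
  qed
qed

lemma qpoch_Suc_split:
  assumes "a + b = Suc L"
  shows "qpoch q L * (1 - q ^ a * q ^ b) = qpoch q (Suc L)"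
  using assms by (simp only: power_add[symmetric] qpoch_Suc)

lemma qbinom_mult_qpoch:
  "k \<le> L \<Longrightarrow> qbinom q L k * qpoch q k * qpoch q (L - k) = qpoch q L"
proof (induction L arbitrary: k)
  case 0
  then show ?case by simp
next
  case (Suc L)
  show ?case
  proof (cases k)
    case 0
    then show ?thesis by simp
  next
    case (Suc s)
    with Suc.prems have s: "s \<le> L" by simp
    have "qbinom q (Suc L) k * qpoch q k * qpoch q (Suc L - k) =
        qbinom q L s * qpoch q (Suc s) * qpoch q (L - s) +
        q ^ Suc s * (qbinom q L (Suc s) * qpoch q (Suc s) * qpoch q (L - s))"
      by (simp add: Suc algebra_simps)
    also have "\<dots> = qpoch q L * (1 - q ^ Suc s) + q ^ Suc s * (qpoch q L * (1 - q ^ (L - s)))"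
      using qbinom_mult_qpoch_step[OF Suc.IH s] by (simp only:)
    also have "\<dots> = qpoch q L * (1 - q ^ Suc s * q ^ (L - s))"
      by (simp add: algebra_simps)
    also have "\<dots> = qpoch q (Suc L)"
      using s by (intro qpoch_Suc_split) simp
    finally show ?thesis .
  qed
qed

lemma qbinom_Suc_Suc':
  fixes q :: "'a::idom"
  assumes nz: "qpoch q (Suc L) \<noteq> 0" and s: "s \<le> L"
  shows "qbinom q (Suc L) (Suc s) = qbinom q L (Suc s) + q ^ (L - s) * qbinom q L s"
proof -
  let ?D = "qpoch q (Suc s) * qpoch q (L - s)"
  have prod: "qbinom q (Suc L) (Suc s) * ?D = qpoch q (Suc L)"
    using qbinom_mult_qpoch[of "Suc s" "Suc L" q] s by (simp add: mult.assoc)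
  then have D: "?D \<noteq> 0" using nz by auto
  have "qbinom q L k * qpoch q k * qpoch q (L - k) = qpoch q L" if "k \<le> L" for k
    using that by (rule qbinom_mult_qpoch)
  note step = qbinom_mult_qpoch_step[OF this s, unfolded mult.assoc]
  have "(qbinom q L (Suc s) + q ^ (L - s) * qbinom q L s) * ?D =
      qbinom q L (Suc s) * ?D + q ^ (L - s) * (qbinom q L s * ?D)"
    by (simp only: distrib_right mult.assoc)
  also have "\<dots> = qpoch q L * (1 - q ^ (L - s)) + q ^ (L - s) * (qpoch q L * (1 - q ^ Suc s))"
    using step by (simp only:)
  also have "\<dots> = qpoch q L * (1 - q ^ (L - s) * q ^ Suc s)"
    by (simp add: algebra_simps)
  also have "\<dots> = qpoch q (Suc L)"
    using s by (intro qpoch_Suc_split) simp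
  finally have "(qbinom q L (Suc s) + q ^ (L - s) * qbinom q L s) * ?D = qpoch q (Suc L)" .
  with prod have "qbinom q (Suc L) (Suc s) * ?D = (qbinom q L (Suc s) + q ^ (L - s) * qbinom q L s) * ?D"
    by (rule trans[OF _ sym])
  then show ?thesis using mult_right_cancel[OF D] by blast
qed

lemma qpoch_fps_X_power_nth_0: "m > 0 \<Longrightarrow> qpoch (fps_X ^ m) L $ 0 = (1 :: 'a::comm_ring_1)"
  by (induction L) (auto simp: qpoch_Suc)

lemma qpoch_fps_X_power_nonzero: "m > 0 \<Longrightarrow> qpoch (fps_X ^ m :: 'a::idom fps) L \<noteq> 0"
  using qpoch_fps_X_power_nth_0[of m L] by (metis fps_zero_nth zero_neq_one)

lemma sum_qbinom_Suc:
  fixes q :: "'a::comm_ring_1"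
  shows "(\<Sum>t=0..Suc L. c t * qbinom q (Suc L) t) =
    (\<Sum>t=0..L. c (Suc t) * qbinom q L t) + (\<Sum>t=0..L. c t * q ^ t * qbinom q L t)"
proof -
  have "(\<Sum>t=0..Suc L. c t * qbinom q (Suc L) t) =
      c 0 + (\<Sum>t=0..L. c (Suc t) * qbinom q L t) + (\<Sum>t=0..L. c (Suc t) * q ^ Suc t * qbinom q L (Suc t))"
    by (subst sum.atLeast0_atMost_Suc_shift) (simp add: sum.distrib distrib_left ac_simps)
  moreover have "(\<Sum>t=0..L. c t * q ^ t * qbinom q L t) =
      c 0 + (\<Sum>t=0..L. c (Suc t) * q ^ Suc t * qbinom q L (Suc t))"
  proof -
    have "(\<Sum>t=0..L. c t * q ^ t * qbinom q L t) = (\<Sum>t=0..Suc L. c t * q ^ t * qbinom q L t)"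
      by (simp add: qbinom_eq_0)
    also have "\<dots> = c 0 + (\<Sum>t=0..L. c (Suc t) * q ^ Suc t * qbinom q L (Suc t))"
      by (subst sum.atLeast0_atMost_Suc_shift) simp
    finally show ?thesis .
  qed
  ultimately show ?thesis by (simp add: ac_simps)
qed

lemma sum_qbinom_Suc':
  fixes q :: "'a::idom"
  assumes "qpoch q (Suc L) \<noteq> 0"
  shows "(\<Sum>t=0..Suc L. c t * qbinom q (Suc L) t) =
    (\<Sum>t=0..L. c t * qbinom q L t) + (\<Sum>t=0..L. c (Suc t) * q ^ (L - t) * qbinom q L t)"
proof -
  have "(\<Sum>t=0..L. c (Suc t) * qbinom q (Suc L) (Suc t)) =
      (\<Sum>t=0..L. c (Suc t) * qbinom q L (Suc t)) + (\<Sum>t=0..L. c (Suc t) * q ^ (L - t) * qbinom q L t)"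
    unfolding sum.distrib[symmetric]
    by (rule sum.cong) (simp_all only: qbinom_Suc_Suc'[OF assms] atLeastAtMost_iff distrib_left mult.assoc)
  moreover have "(\<Sum>t=0..Suc L. c t * qbinom q (Suc L) t) =
      c 0 + (\<Sum>t=0..L. c (Suc t) * qbinom q (Suc L) (Suc t))"
    by (subst sum.atLeast0_atMost_Suc_shift) (simp del: qbinom.simps(3))
  moreover have "(\<Sum>t=0..L. c t * qbinom q L t) = c 0 + (\<Sum>t=0..L. c (Suc t) * qbinom q L (Suc t))"
  proof -
    have "(\<Sum>t=0..L. c t * qbinom q L t) = (\<Sum>t=0..Suc L. c t * qbinom q L t)"
      by (simp add: qbinom_eq_0)
    also have "\<dots> = c 0 + (\<Sum>t=0..L. c (Suc t) * qbinom q L (Suc t))"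
      by (subst sum.atLeast0_atMost_Suc_shift) simp
    finally show ?thesis .
  qed
  ultimately show ?thesis by (simp only: ac_simps)
qed

section \<open>A finite Jacobi triple product\<close>

definition gpolygonal :: "nat \<Rightarrow> int \<Rightarrow> int" where
  "gpolygonal m k = int m * (k * (k + 1) div 2) - k"

lemma two_mult_gpolygonal: "2 * gpolygonal m k = int m * (k * (k + 1)) - 2 * k"
proof -
  have "2 * (k * (k + 1) div 2) = k * (k + 1)" by simp
  then show ?thesis unfolding gpolygonal_def by (simp add: algebra_simps)
qed

lemma gpolygonal_Suc: "gpolygonal m (k + 1) = gpolygonal m k + int m * (k + 1) - 1"
proof -
  have "(k + 1) * (k + 1 + 1) = k * (k + 1) + 2 * (k + 1)" by algebra
  then have "(k + 1) * (k + 1 + 1) div 2 = k * (k + 1) div 2 + (k + 1)" by simp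
  then show ?thesis unfolding gpolygonal_def by (simp add: algebra_simps)
qed

lemma abs_le_gpolygonal:
  assumes "m \<ge> 2"
  shows "\<bar>k\<bar> \<le> gpolygonal m k"
proof -
  define T where "T = k * (k + 1) div 2"
  have T2: "2 * T = k * (k + 1)" unfolding T_def by simp
  show ?thesis
  proof (cases "k \<ge> 0")
    case True
    have "k * (k - 1) \<ge> 0" using True by (cases "k = 0") simp_all
    then have "k \<le> T" using T2 by (simp add: algebra_simps)
    moreover have "2 * T \<le> int m * T" using assms True \<open>k \<le> T\<close> by (intro mult_right_mono) auto
    ultimately show ?thesis unfolding gpolygonal_def T_def[symmetric] using True by simp
  next
    case False
    have "0 \<le> k * (k + 1)" using False by (simp add: mult_nonpos_nonpos)
    then have "0 \<le> int m * T" using T2 by simp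
    then show ?thesis unfolding gpolygonal_def T_def[symmetric] using False by simp
  qed
qed

lemma gpolygonal_nonneg: "m \<ge> 2 \<Longrightarrow> 0 \<le> gpolygonal m k"
  using abs_le_gpolygonal[of m k] by simp

text \<open>For m = 2 the values are the squares, each taken twice.\<close>
lemma gpolygonal_inj:
  assumes m: "m \<ge> 3" and eq: "gpolygonal m a = gpolygonal m b"
  shows "a = b"
proof (rule ccontr)
  assume "a \<noteq> b"
  have "int m * (a * (a + 1)) - 2 * a = int m * (b * (b + 1)) - 2 * b"
    using two_mult_gpolygonal[of m a] two_mult_gpolygonal[of m b] eq by simp
  then have "(a - b) * (int m * (a + b + 1) - 2) = 0"
    by (simp add: algebra_simps)
  then have h: "int m * (a + b + 1) = 2" using \<open>a \<noteq> b\<close> by simp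
  show False
  proof (cases "a + b + 1 \<ge> 1")
    case True
    then have "int m * 1 \<le> int m * (a + b + 1)" by (intro mult_left_mono) auto
    then show False using h m by simp
  next
    case False
    then have "int m * (a + b + 1) \<le> 0" by (simp add: mult_nonneg_nonpos)
    then show False using h by simp
  qed
qed

lemma Q_pent_eq_gpolygonal: "Q_pent (m + 2) k = gpolygonal m (int k)"
proof -
  have "2 * gpolygonal m (int k) = int k * (int m * int k + (int m - 2))"
    using two_mult_gpolygonal[of m "int k"] by (simp add: algebra_simps)
  then show ?thesis unfolding Q_pent_def by (simp add: algebra_simps)
qed

lemma P_pent_eq_gpolygonal: "P_pent (m + 2) k = gpolygonal m (- int k)"
proof -
  have "2 * gpolygonal m (- int k) = int k * (int m * int k - (int m - 2))"
    using two_mult_gpolygonal[of m "- int k"] by (simp add: algebra_simps)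
  then show ?thesis unfolding P_pent_def by (simp add: algebra_simps)
qed

definition jacobi_term :: "nat \<Rightarrow> int \<Rightarrow> 'a::comm_ring_1 fps" where
  "jacobi_term m k = fps_const ((-1) ^ nat \<bar>k\<bar>) * fps_X ^ nat (gpolygonal m k)"

definition jacobi_prod :: "nat \<Rightarrow> nat \<Rightarrow> nat \<Rightarrow> 'a::comm_ring_1 fps" where
  "jacobi_prod m a b = (\<Prod>i=1..a. 1 - fps_X ^ (m * i - 1)) * (\<Prod>i=1..b. 1 - fps_X ^ (m * i - m + 1))"

lemma jacobi_term_shift:
  assumes m: "m \<ge> 2" and e: "gpolygonal m k + int x = gpolygonal m (k + 1) + int y"
  shows "jacobi_term m k * fps_X ^ x = - (jacobi_term m (k + 1) * fps_X ^ y)"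
proof -
  have sign: "(-1) ^ nat \<bar>k + 1\<bar> = - ((-1) ^ nat \<bar>k\<bar> :: 'a)"
  proof (cases "k \<ge> 0")
    case True
    then have "nat \<bar>k + 1\<bar> = Suc (nat \<bar>k\<bar>)" by simp
    then show ?thesis by (simp only: power_Suc) simp
  next
    case False
    then have "nat \<bar>k\<bar> = Suc (nat \<bar>k + 1\<bar>)" by simp
    then show ?thesis by (simp only: power_Suc) simp
  qed
  have "nat (gpolygonal m k) + x = nat (gpolygonal m (k + 1)) + y"
    using e gpolygonal_nonneg[OF m, of k] gpolygonal_nonneg[OF m, of "k + 1"] by linarith
  then have "fps_X ^ nat (gpolygonal m k) * fps_X ^ x =
      (fps_X ^ nat (gpolygonal m (k + 1)) * fps_X ^ y :: 'a fps)"
    by (simp add: power_add[symmetric])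
  then show ?thesis unfolding jacobi_term_def sign by (simp add: mult.assoc)
qed

lemma finite_jacobi_triple_product_Suc_left:
  assumes m: "m \<ge> 2"
    and IH: "(jacobi_prod m a b :: 'a::idom fps) =
      (\<Sum>t=0..a+b. jacobi_term m (int t - int b) * qbinom (fps_X ^ m) (a + b) t)"
  shows "(jacobi_prod m (Suc a) b :: 'a fps) =
      (\<Sum>t=0..Suc a+b. jacobi_term m (int t - int b) * qbinom (fps_X ^ m) (Suc a + b) t)"
proof -
  define L where "L = a + b"
  define e where "e = m * Suc a - 1"
  define q :: "'a fps" where "q = fps_X ^ m"
  define c :: "nat \<Rightarrow> 'a fps" where "c t = jacobi_term m (int t - int b)" for t
  have shift: "c t * fps_X ^ e = - (c (Suc t) * q ^ (L - t))" if "t \<le> L" for t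
  proof -
    have "int e = int m * (int a + 1) - 1"
      using m by (simp add: e_def of_nat_diff algebra_simps)
    moreover have "int (m * (L - t)) = int m * (int a + int b - int t)"
      using that by (simp add: L_def of_nat_diff)
    ultimately have "gpolygonal m (int t - int b) + int e =
        gpolygonal m (int t - int b + 1) + int (m * (L - t))"
      using gpolygonal_Suc[of m "int t - int b"] by (simp add: algebra_simps)
    then have "c t * fps_X ^ e = - (jacobi_term m (int t - int b + 1) * fps_X ^ (m * (L - t)))"
      unfolding c_def by (rule jacobi_term_shift[OF m])
    moreover have "c (Suc t) = jacobi_term m (int t - int b + 1)"
      unfolding c_def by (rule arg_cong[where f = "jacobi_term m"]) simp
    ultimately show ?thesis unfolding q_def power_mult by simp
  qed
  have "(jacobi_prod m (Suc a) b :: 'a fps) = jacobi_prod m a b * (1 - fps_X ^ e)"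
    unfolding jacobi_prod_def e_def by (simp only: prod.cl_ivl_Suc) (simp add: ac_simps)
  also have "jacobi_prod m a b = (\<Sum>t=0..L. c t * qbinom q L t)"
    by (simp add: IH L_def q_def c_def)
  also have "(\<Sum>t=0..L. c t * qbinom q L t) * (1 - fps_X ^ e) =
      (\<Sum>t=0..L. c t * qbinom q L t) - (\<Sum>t=0..L. (c t * fps_X ^ e) * qbinom q L t)"
    unfolding right_diff_distrib mult_1_right sum_distrib_right by (simp only: ac_simps)
  also have "(\<Sum>t=0..L. (c t * fps_X ^ e) * qbinom q L t) =
      - (\<Sum>t=0..L. c (Suc t) * q ^ (L - t) * qbinom q L t)"
    unfolding sum_negf[symmetric] by (rule sum.cong) (simp_all add: shift)
  also have "(\<Sum>t=0..L. c t * qbinom q L t) - - (\<Sum>t=0..L. c (Suc t) * q ^ (L - t) * qbinom q L t) =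
      (\<Sum>t=0..Suc L. c t * qbinom q (Suc L) t)"
    unfolding diff_minus_eq_add using m
    by (intro sum_qbinom_Suc'[symmetric]) (simp add: q_def qpoch_fps_X_power_nonzero)
  finally show ?thesis by (simp add: L_def q_def c_def)
qed

lemma finite_jacobi_triple_product_Suc_right:
  assumes m: "m \<ge> 2"
    and IH: "(jacobi_prod m a b :: 'a::idom fps) =
      (\<Sum>t=0..a+b. jacobi_term m (int t - int b) * qbinom (fps_X ^ m) (a + b) t)"
  shows "(jacobi_prod m a (Suc b) :: 'a fps) =
      (\<Sum>t=0..a+Suc b. jacobi_term m (int t - int (Suc b)) * qbinom (fps_X ^ m) (a + Suc b) t)"
proof -
  define L where "L = a + b"
  define e where "e = m * b + 1"
  define q :: "'a fps" where "q = fps_X ^ m"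
  define c :: "nat \<Rightarrow> 'a fps" where "c t = jacobi_term m (int t - int (Suc b))" for t
  have shift: "c (Suc t) * fps_X ^ e = - (c t * q ^ t)" for t
  proof -
    have "gpolygonal m (int t - int (Suc b)) + int (m * t) =
        gpolygonal m (int t - int (Suc b) + 1) + int e"
      using gpolygonal_Suc[of m "int t - int (Suc b)"] by (simp add: e_def algebra_simps)
    then have "c t * fps_X ^ (m * t) = - (jacobi_term m (int t - int (Suc b) + 1) * fps_X ^ e)"
      unfolding c_def by (rule jacobi_term_shift[OF m])
    moreover have "c (Suc t) = jacobi_term m (int t - int (Suc b) + 1)"
      unfolding c_def by (rule arg_cong[where f = "jacobi_term m"]) simp
    ultimately show ?thesis unfolding q_def power_mult by (metis minus_minus)
  qed
  have "m * Suc b - m + 1 = e" by (simp add: e_def)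
  then have "(jacobi_prod m a (Suc b) :: 'a fps) = jacobi_prod m a b * (1 - fps_X ^ e)"
    unfolding jacobi_prod_def by (simp only: prod.cl_ivl_Suc) (simp add: ac_simps)
  also have "jacobi_prod m a b = (\<Sum>t=0..L. c (Suc t) * qbinom q L t)"
    by (simp add: IH L_def q_def c_def)
  also have "(\<Sum>t=0..L. c (Suc t) * qbinom q L t) * (1 - fps_X ^ e) =
      (\<Sum>t=0..L. c (Suc t) * qbinom q L t) - (\<Sum>t=0..L. (c (Suc t) * fps_X ^ e) * qbinom q L t)"
    unfolding right_diff_distrib mult_1_right sum_distrib_right by (simp only: ac_simps)
  also have "(\<Sum>t=0..L. (c (Suc t) * fps_X ^ e) * qbinom q L t) = - (\<Sum>t=0..L. c t * q ^ t * qbinom q L t)"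
    unfolding shift sum_negf[symmetric] by simp
  also have "(\<Sum>t=0..L. c (Suc t) * qbinom q L t) - - (\<Sum>t=0..L. c t * q ^ t * qbinom q L t) =
      (\<Sum>t=0..Suc L. c t * qbinom q (Suc L) t)"
    unfolding diff_minus_eq_add by (rule sum_qbinom_Suc[symmetric])
  finally show ?thesis by (simp add: L_def q_def c_def)
qed

theorem finite_jacobi_triple_product:
  assumes "m \<ge> 2"
  shows "(jacobi_prod m a b :: 'a::idom fps) =
    (\<Sum>t=0..a+b. jacobi_term m (int t - int b) * qbinom (fps_X ^ m) (a + b) t)"
proof (induction b)
  case 0
  show ?case
  proof (induction a)
    case 0
    show ?case by (simp add: jacobi_prod_def jacobi_term_def gpolygonal_def)
  next
    case (Suc a)
    then show ?case by (rule finite_jacobi_triple_product_Suc_left[OF assms])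
  qed
next
  case (Suc b)
  then show ?case by (rule finite_jacobi_triple_product_Suc_right[OF assms])
qed

section \<open>Coefficients of the truncated product\<close>

lemma fps_nth_eq_if_fps_X_power_dvd_diff:
  fixes f g :: "'a::comm_ring_1 fps"
  assumes "fps_X ^ Suc N dvd f - g" and "i \<le> N"
  shows "f $ i = g $ i"
proof -
  obtain W where "f - g = fps_X ^ Suc N * W" using assms(1) by (elim dvdE)
  then have "(f - g) $ i = 0" using assms(2) by (simp add: fps_X_power_mult_nth del: power_Suc)
  then show ?thesis by simp
qed

lemma dvd_mult_sub_one:
  fixes a b d :: "'a::comm_ring_1"
  assumes "d dvd a - 1" and "d dvd b - 1"
  shows "d dvd a * b - 1"
proof -
  have "a * b - 1 = a * (b - 1) + (a - 1)" by (simp add: algebra_simps)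
  then show ?thesis using assms by (simp only: dvd_add dvd_mult)
qed

lemma power_dvd_prod_one_minus_power_sub_one:
  fixes q :: "'a::comm_ring_1"
  assumes "finite S" and "\<And>i. i \<in> S \<Longrightarrow> d \<le> i"
  shows "q ^ d dvd (\<Prod>i\<in>S. 1 - q ^ i) - 1"
  using assms
proof (induction S rule: finite_induct)
  case empty
  then show ?case by simp
next
  case (insert x F)
  have "q ^ d dvd (1 - q ^ x) - 1"
    using insert.prems le_imp_power_dvd[of d x q] by simp
  then show ?case using insert by (simp add: dvd_mult_sub_one)
qed

text \<open>By the product formula for qbinom, qpoch q N * qbinom q (2N) t is a product of
  factors 1 - q^i with i > min t (2N - t) only.\<close>
lemma power_dvd_qpoch_mult_qbinom_sub_one:
  fixes q :: "'a::idom"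
  assumes nz: "qpoch q (2 * N) \<noteq> 0" and t: "t \<le> 2 * N"
  shows "q ^ (min t (2 * N - t) + 1) dvd qpoch q N * qbinom q (2 * N) t - 1"
proof -
  define u where "u = min t (2 * N - t)"
  define v where "v = 2 * N - u"
  have uv: "u \<le> N" "v \<le> 2 * N" "u \<le> v" unfolding u_def v_def by auto
  have prod: "qbinom q (2 * N) t * (qpoch q u * qpoch q v) = qpoch q (2 * N)"
  proof (cases "t \<le> N")
    case True
    then have "u = t" "v = 2 * N - t" unfolding u_def v_def by auto
    then show ?thesis using qbinom_mult_qpoch[OF t, of q] by (simp add: ac_simps)
  next
    case False
    then have "u = 2 * N - t" "v = t" unfolding u_def v_def using t by auto
    then show ?thesis using qbinom_mult_qpoch[OF t, of q] by (simp add: ac_simps)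
  qed
  define Q1 where "Q1 = (\<Prod>i\<in>{u<..N}. 1 - q ^ i)"
  define Q2 where "Q2 = (\<Prod>i\<in>{v<..2 * N}. 1 - q ^ i)"
  have "(qpoch q N * qbinom q (2 * N) t) * (qpoch q u * qpoch q v) =
      (qpoch q u * Q1) * (qbinom q (2 * N) t * (qpoch q u * qpoch q v))"
    unfolding Q1_def qpoch_split[OF uv(1), of q] by (simp only: ac_simps)
  also have "\<dots> = (Q1 * Q2) * (qpoch q u * qpoch q v)"
    unfolding prod Q2_def qpoch_split[OF uv(2), of q] by (simp only: ac_simps)
  finally have eq: "qpoch q N * qbinom q (2 * N) t = Q1 * Q2"
    using prod nz by auto
  have "q ^ (u + 1) dvd Q1 - 1"
    unfolding Q1_def by (rule power_dvd_prod_one_minus_power_sub_one) auto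
  moreover have "q ^ (u + 1) dvd Q2 - 1"
    unfolding Q2_def using uv by (intro power_dvd_prod_one_minus_power_sub_one) auto
  ultimately show ?thesis unfolding eq u_def[symmetric] by (rule dvd_mult_sub_one)
qed

lemma fps_X_power_dvd_jacobi_term_mult:
  assumes m: "m \<ge> 2" and t: "t \<le> 2 * N"
  shows "fps_X ^ Suc N dvd jacobi_term m (int t - int N) * (fps_X ^ m) ^ (min t (2 * N - t) + 1)"
proof -
  define u where "u = min t (2 * N - t)"
  define k where "k = int t - int N"
  have uN: "u \<le> N" unfolding u_def by simp
  have "\<bar>k\<bar> \<le> gpolygonal m k" by (rule abs_le_gpolygonal[OF m])
  moreover have "\<bar>k\<bar> = int N - int u" unfolding k_def u_def using t by auto
  ultimately have "N - u \<le> nat (gpolygonal m k)" by linarith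
  moreover have "u + 1 \<le> m * (u + 1)" using mult_le_mono1[of 1 m "u + 1"] m by simp
  ultimately have "Suc N \<le> nat (gpolygonal m k) + m * (u + 1)" using uN by linarith
  then have "fps_X ^ Suc N dvd (fps_X ^ (nat (gpolygonal m k) + m * (u + 1)) :: 'a fps)"
    by (rule le_imp_power_dvd)
  then show ?thesis unfolding jacobi_term_def k_def[symmetric] u_def[symmetric]
    by (simp add: power_add power_mult mult.assoc)
qed

definition polygonal_prod :: "nat \<Rightarrow> nat \<Rightarrow> 'a::comm_ring_1 fps" where
  "polygonal_prod m N = qpoch (fps_X ^ m) N * jacobi_prod m N N"

lemma fps_X_power_dvd_polygonal_prod_sub:
  assumes m: "m \<ge> 2"
  shows "fps_X ^ Suc N dvd
    polygonal_prod m N - (\<Sum>t=0..2*N. jacobi_term m (int t - int N) :: 'a::idom fps)"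
proof -
  let ?q = "fps_X ^ m :: 'a fps"
  have eq: "polygonal_prod m N - (\<Sum>t=0..2*N. jacobi_term m (int t - int N)) =
      (\<Sum>t=0..2*N. jacobi_term m (int t - int N) * (qpoch ?q N * qbinom ?q (2 * N) t - 1))"
    unfolding polygonal_prod_def finite_jacobi_triple_product[OF m, of N N, folded mult_2]
    by (simp add: sum_distrib_left sum_subtractf algebra_simps)
  have term_dvd: "fps_X ^ Suc N dvd jacobi_term m (int t - int N) * (qpoch ?q N * qbinom ?q (2 * N) t - 1)"
    if t: "t \<in> {0..2*N}" for t
  proof -
    have "?q ^ (min t (2 * N - t) + 1) dvd qpoch ?q N * qbinom ?q (2 * N) t - 1"
      using m t by (intro power_dvd_qpoch_mult_qbinom_sub_one qpoch_fps_X_power_nonzero) auto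
    then show ?thesis
      using fps_X_power_dvd_jacobi_term_mult[OF m, of t N] t by (auto intro: dvd_trans mult_dvd_mono)
  qed
  show ?thesis unfolding eq by (rule dvd_sum) (rule term_dvd)
qed

lemma jacobi_term_nth:
  assumes "m \<ge> 2"
  shows "jacobi_term m k $ i = (if gpolygonal m k = int i then (-1) ^ nat \<bar>k\<bar> else 0)"
  using gpolygonal_nonneg[OF assms, of k] unfolding jacobi_term_def by auto

lemma e_coef_gpolygonal:
  assumes m: "m \<ge> 3" and k: "gpolygonal m k = int i"
  shows "e_coef (m + 2) i = (-1) ^ nat \<bar>k\<bar>"
proof (cases "k = 0")
  case True
  then show ?thesis using k by (simp add: e_coef_def gpolygonal_def)
next
  case False
  have "i \<noteq> 0"
    using k gpolygonal_inj[OF m, of k 0] False by (auto simp: gpolygonal_def)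
  moreover have "1 \<le> j \<and> (gpolygonal m k = gpolygonal m (- int j) \<or> gpolygonal m k = gpolygonal m (int j))
      \<longleftrightarrow> j = nat \<bar>k\<bar>" for j
  proof
    assume "1 \<le> j \<and> (gpolygonal m k = gpolygonal m (- int j) \<or> gpolygonal m k = gpolygonal m (int j))"
    then have "k = - int j \<or> k = int j" using gpolygonal_inj[OF m, of k] by auto
    then show "j = nat \<bar>k\<bar>" by auto
  next
    assume "j = nat \<bar>k\<bar>"
    then have "k = - int j \<or> k = int j" "1 \<le> j" using False by auto
    then show "1 \<le> j \<and> (gpolygonal m k = gpolygonal m (- int j) \<or> gpolygonal m k = gpolygonal m (int j))"
      by auto
  qed
  ultimately show ?thesis
    unfolding e_coef_def P_pent_eq_gpolygonal Q_pent_eq_gpolygonal k[symmetric] by simp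
qed

lemma e_coef_eq_0:
  assumes "\<And>k. gpolygonal m k \<noteq> int i"
  shows "e_coef (m + 2) i = 0"
proof -
  have "i \<noteq> 0" using assms[of 0] by (auto simp: gpolygonal_def)
  moreover have "\<not> (\<exists>j\<ge>1. int i = P_pent (m + 2) j \<or> int i = Q_pent (m + 2) j)"
    using assms by (metis P_pent_eq_gpolygonal Q_pent_eq_gpolygonal)
  ultimately show ?thesis unfolding e_coef_def by simp
qed

lemma sum_jacobi_term_nth:
  assumes m: "m \<ge> 3" and i: "i \<le> N"
  shows "(\<Sum>t=0..2*N. jacobi_term m (int t - int N) :: 'a::comm_ring_1 fps) $ i = of_int (e_coef (m + 2) i)"
proof (cases "\<exists>k. gpolygonal m k = int i")
  case True
  then obtain k where k: "gpolygonal m k = int i" by blast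
  have kN: "\<bar>k\<bar> \<le> int N" using abs_le_gpolygonal[of m k] m k i by simp
  define t0 where "t0 = nat (k + int N)"
  have "gpolygonal m (int t - int N) = int i \<longleftrightarrow> t = t0" for t
    using gpolygonal_inj[OF m, of "int t - int N" k] k kN unfolding t0_def by auto
  then have "(\<Sum>t=0..2*N. jacobi_term m (int t - int N) :: 'a fps) $ i =
      (\<Sum>t=0..2*N. if t = t0 then (-1) ^ nat \<bar>k\<bar> else 0)"
    using m kN unfolding fps_sum_nth t0_def by (intro sum.cong) (auto simp: jacobi_term_nth)
  also have "\<dots> = (-1) ^ nat \<bar>k\<bar>" using kN by (simp add: t0_def)
  finally show ?thesis using e_coef_gpolygonal[OF m k] by simp
next
  case False
  then have "e_coef (m + 2) i = 0" by (intro e_coef_eq_0) auto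
  then show ?thesis using m False by (simp add: fps_sum_nth jacobi_term_nth)
qed

lemma polygonal_prod_nth:
  assumes "m \<ge> 3" and "i \<le> N"
  shows "(polygonal_prod m N :: 'a::idom fps) $ i = of_int (e_coef (m + 2) i)"
proof -
  have "(polygonal_prod m N :: 'a fps) $ i = (\<Sum>t=0..2*N. jacobi_term m (int t - int N) :: 'a fps) $ i"
    using assms by (intro fps_nth_eq_if_fps_X_power_dvd_diff[OF fps_X_power_dvd_polygonal_prod_sub]) auto
  also have "\<dots> = of_int (e_coef (m + 2) i)" by (rule sum_jacobi_term_nth[OF assms])
  finally show ?thesis .
qed

section \<open>Divisor sums\<close>

definition polygonal_lambert :: "nat \<Rightarrow> nat \<Rightarrow> 'a::comm_ring_1 fps" where
  "polygonal_lambert m N = (\<Sum>i=1..N. multiples_fps (m * i)) +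
     (\<Sum>i=1..N. multiples_fps (m * i - 1)) + (\<Sum>i=1..N. multiples_fps (m * i - m + 1))"

lemma fps_X_deriv_polygonal_prod:
  assumes "m \<ge> 2"
  shows "fps_X * fps_deriv (polygonal_prod m N :: 'a::comm_ring_1 fps) =
    - (polygonal_prod m N * polygonal_lambert m N)"
proof -
  have l1: "fps_X * fps_deriv (qpoch (fps_X ^ m) N :: 'a fps) =
      - (qpoch (fps_X ^ m) N * (\<Sum>i=1..N. multiples_fps (m * i)))"
    unfolding qpoch_def power_mult[symmetric]
    by (rule fps_X_deriv_prod_one_minus_fps_X_power) (use assms in auto)
  have l2: "fps_X * fps_deriv (\<Prod>i=1..N. 1 - fps_X ^ (m * i - 1) :: 'a fps) =
      - ((\<Prod>i=1..N. 1 - fps_X ^ (m * i - 1)) * (\<Sum>i=1..N. multiples_fps (m * i - 1)))"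
  proof (rule fps_X_deriv_prod_one_minus_fps_X_power)
    fix i assume "i \<in> {1..N}"
    then have "2 * 1 \<le> m * i" using assms by (intro mult_le_mono) auto
    then show "m * i - 1 > 0" by simp
  qed simp
  have l3: "fps_X * fps_deriv (\<Prod>i=1..N. 1 - fps_X ^ (m * i - m + 1) :: 'a fps) =
      - ((\<Prod>i=1..N. 1 - fps_X ^ (m * i - m + 1)) * (\<Sum>i=1..N. multiples_fps (m * i - m + 1)))"
    by (rule fps_X_deriv_prod_one_minus_fps_X_power) auto
  show ?thesis
    using fps_X_deriv_mult_logderiv[OF l1 fps_X_deriv_mult_logderiv[OF l2 l3]]
    unfolding polygonal_prod_def jacobi_prod_def polygonal_lambert_def by (simp add: add.assoc)
qed

lemma sum_divisors_in_progression:
  fixes f :: "nat \<Rightarrow> nat"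
  assumes f: "\<And>i. 1 \<le> i \<Longrightarrow> f i = m * (i - 1) + r" and r: "0 < r" "r \<le> m" and n: "n \<ge> 1"
  shows "(\<Sum>i=1..n. if f i dvd n then real (f i) else 0) = (\<Sum>d | d dvd n \<and> d mod m = r mod m. real d)"
proof -
  have inj: "inj_on f {1..n}" using f r by (auto simp: inj_on_def)
  have "(\<Sum>i=1..n. if f i dvd n then real (f i) else 0) = (\<Sum>i\<in>{i\<in>{1..n}. f i dvd n}. real (f i))"
    by (rule sum.inter_filter[symmetric]) simp
  also have "\<dots> = (\<Sum>d\<in>f ` {i\<in>{1..n}. f i dvd n}. real d)"
  proof -
    have inj': "inj_on f {i\<in>{1..n}. f i dvd n}" using inj by (rule inj_on_subset) auto
    show ?thesis unfolding sum.reindex[OF inj'] comp_def ..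
  qed
  also have "f ` {i\<in>{1..n}. f i dvd n} = {d. d dvd n \<and> d mod m = r mod m}"
  proof (intro equalityI subsetI)
    fix d assume "d \<in> f ` {i\<in>{1..n}. f i dvd n}"
    then show "d \<in> {d. d dvd n \<and> d mod m = r mod m}" using f by auto
  next
    fix d assume "d \<in> {d. d dvd n \<and> d mod m = r mod m}"
    then have dvd: "d dvd n" and d_mod: "d mod m = r mod m" by auto
    have "0 < d" "d \<le> n" using dvd n by (auto intro: dvd_imp_le)
    have "r \<le> d"
    proof (cases "r = m")
      case True
      then show ?thesis using d_mod \<open>0 < d\<close> by (auto intro: dvd_imp_le)
    next
      case False
      then show ?thesis using d_mod r by (metis mod_less mod_less_eq_dividend nat_less_le)
    qed
    then obtain j where j: "d - r = m * j" using d_mod by (metis dvdE mod_eq_dvd_iff_nat)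
    have "j \<le> m * j" using r by simp
    then have "Suc j \<le> n" using j \<open>0 < d\<close> \<open>d \<le> n\<close> r by linarith
    moreover have "f (Suc j) = d" using f[of "Suc j"] j \<open>r \<le> d\<close> by simp
    ultimately show "d \<in> f ` {i\<in>{1..n}. f i dvd n}" using dvd by force
  qed
  finally show ?thesis .
qed

lemma polygonal_lambert_nth:
  assumes m: "m \<ge> 3" and n: "n \<ge> 1"
  shows "(polygonal_lambert m n :: real fps) $ n = real (sigma' m n)"
proof -
  let ?D = "\<lambda>c. {d. d dvd n \<and> d mod m = c}"
  let ?sum = "\<lambda>f. \<Sum>i=1..n. if f i dvd n then real (f i) else 0"
  have fin: "finite (?D c)" for c
    using n by (auto intro: finite_subset[OF _ finite_divisors_nat])
  have "{d. d dvd n \<and> (d mod m = 0 \<or> d mod m = 1 \<or> d mod m = m - 1)} = ?D 0 \<union> ?D (m - 1) \<union> ?D 1"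
    by auto
  moreover have "?D 0 \<inter> ?D (m - 1) = {}" "(?D 0 \<union> ?D (m - 1)) \<inter> ?D 1 = {}"
    using m by auto
  ultimately have "real (sigma' m n) = (\<Sum>d\<in>?D 0. real d) + (\<Sum>d\<in>?D (m - 1). real d) + (\<Sum>d\<in>?D 1. real d)"
    unfolding sigma'_def of_nat_sum by (simp add: sum.union_disjoint fin)
  also have "\<dots> = ?sum (\<lambda>i. m * i) + ?sum (\<lambda>i. m * i - 1) + ?sum (\<lambda>i. m * i - m + 1)"
  proof -
    have mult_pred: "m * i = m * (i - 1) + m" if "1 \<le> i" for i
      using that by (cases i) auto
    have "?sum (\<lambda>i. m * i) = (\<Sum>d\<in>?D (m mod m). real d)"
      by (rule sum_divisors_in_progression) (use m n mult_pred in auto)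
    moreover have "?sum (\<lambda>i. m * i - 1) = (\<Sum>d\<in>?D ((m - 1) mod m). real d)"
      by (rule sum_divisors_in_progression) (use m n mult_pred in auto)
    moreover have "?sum (\<lambda>i. m * i - m + 1) = (\<Sum>d\<in>?D (1 mod m). real d)"
      by (rule sum_divisors_in_progression) (use m n mult_pred in auto)
    ultimately show ?thesis using m by simp
  qed
  also have "\<dots> = (polygonal_lambert m n :: real fps) $ n"
  proof -
    have "(\<Sum>i=1..n. multiples_fps (f i) :: real fps) $ n = ?sum f" for f
      using n by (simp add: fps_sum_nth multiples_fps_nth)
    then show ?thesis unfolding polygonal_lambert_def by (simp only: fps_add_nth)
  qed
  finally show ?thesis by simp
qed

theorem corollary3p1:
  fixes n m :: nat
  assumes "n \<ge> 1" and "m \<ge> 3"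
  shows "real (sigma' m n) =
    1 / fact (n - 1) * (\<Sum>k=1..n. (-1) ^ k * fact (k - 1) *
       partial_bell n k (\<lambda>i. fact i * real_of_int (e_coef (m + 2) i)))"
proof -
  define P :: "real fps" where "P = polygonal_prod m n"
  have P_nth: "P $ i = of_int (e_coef (m + 2) i)" if "i \<le> n" for i
    unfolding P_def using assms(2) that by (rule polygonal_prod_nth)
  then have P0: "P $ 0 = 1" by (simp add: e_coef_def)
  have "fps_X * fps_deriv P = - (P * polygonal_lambert m n)"
    unfolding P_def using assms(2) by (intro fps_X_deriv_polygonal_prod) simp
  then have "real n * (fps_ln 1 oo (P - 1)) $ n = - polygonal_lambert m n $ n"
    by (rule fps_ln_compose_nth_eq_logderiv[OF P0 _ assms(1)])
  moreover have "polygonal_lambert m n $ n = real (sigma' m n)"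
    using assms(2,1) by (rule polygonal_lambert_nth)
  ultimately have "real (sigma' m n) = - real n * (fps_ln 1 oo (P - 1)) $ n" by simp
  also have "\<dots> = 1 / fact (n - 1) *
      (\<Sum>k=1..n. (-1) ^ k * fact (k - 1) * partial_bell n k (\<lambda>i. fact i * (P - 1) $ i))"
    using P0 assms(1) by (intro fps_ln_compose_nth_eq_partial_bell) auto
  also have "\<dots> = 1 / fact (n - 1) * (\<Sum>k=1..n. (-1) ^ k * fact (k - 1) *
       partial_bell n k (\<lambda>i. fact i * real_of_int (e_coef (m + 2) i)))"
    using P_nth by (auto intro!: sum.cong partial_bell_cong)
  finally show ?thesis .
qed

end
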